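(* Let $g:\mathbb{C}\to\mathbb{C}$ (with $\mathbb{C}\cong\mathbb{R}^2$) be a homeomorphism topologically conjugate to the reverse homothety $z\mapsto\bar z/2$. Then $g$ satisfies the topological shadowing property.
   Context: Let $(X,d)$ be a metric space and $f:X\to X$ a homeomorphism; $\mathcal{C}^+=\{\epsilon:X\to\mathbb{R}^+ : \epsilon \text{ continuous}\}$. For $\delta\in\mathcal{C}^+$, a sequence $\{x_n\}_{n\in\mathbb{Z}}\subset X$ is a $\delta$-pseudo-orbit of $f$ if $d(f(x_n),x_{n+1})<\delta(f(x_n))$ for every $n\in\mathbb{Z}$. For $\epsilon\in\mathcal{C}^+$, the sequence $\{x_n\}$ is $\epsilon$-shadowed by an orbit if there is $y\in X$ with $d(f^n(y),x_n)<\epsilon(x_n)$ for every $n\in\mathbb{Z}$. The homeomorphism $f$ satisfies the topological shadowing property if for every $\epsilon\in\mathcal{C}^+$ there exists $\delta\in\mathcal{C}^+$ such that every $\delta$-pseudo-orbit is $\epsilon$-shadowed by an orbit. $\mathbb{C}$ carries the Euclidean metric. *)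

theory Defs
  imports "HOL-Analysis.Analysis"
begin

definition pos_cont :: "('a::metric_space \<Rightarrow> real) set" where
  "pos_cont = {e. continuous_on UNIV e \<and> (\<forall>x. e x > 0)}"

definition ipow :: "('a \<Rightarrow> 'a) \<Rightarrow> int \<Rightarrow> 'a \<Rightarrow> 'a" where
  "ipow f n = (if n \<ge> 0 then f ^^ nat n else inv f ^^ nat (- n))"

definition pseudo_orbit :: "('a::metric_space \<Rightarrow> 'a) \<Rightarrow> ('a \<Rightarrow> real) \<Rightarrow> (int \<Rightarrow> 'a) \<Rightarrow> bool" where
  "pseudo_orbit f d xs \<longleftrightarrow> (\<forall>n. dist (f (xs n)) (xs (n + 1)) < d (f (xs n)))"

definition shadowed :: "('a::metric_space \<Rightarrow> 'a) \<Rightarrow> ('a \<Rightarrow> real) \<Rightarrow> (int \<Rightarrow> 'a) \<Rightarrow> bool" where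
  "shadowed f e xs \<longleftrightarrow> (\<exists>y. \<forall>n. dist (ipow f n y) (xs n) < e (xs n))"

definition topological_shadowing :: "('a::metric_space \<Rightarrow> 'a) \<Rightarrow> bool" where
  "topological_shadowing f \<longleftrightarrow>
     (\<forall>e\<in>pos_cont. \<exists>d\<in>pos_cont. \<forall>xs. pseudo_orbit f d xs \<longrightarrow> shadowed f e xs)"

end

theory Submission
  imports Defs
begin

text \<open>
  Topological shadowing is invariant under topological conjugacy: on a proper space a
  homeomorphism has a modulus of continuity that is uniform on balls, so continuous positive
  tolerances can be transported along it. It therefore suffices to treat the real-linear
  contraction \<open>L z = cnj z / 2\<close>. If \<open>y\<close> is a pseudo-orbit with errors
  \<open>e k = y (k + 1) - L (y k)\<close>, then \<open>n \<mapsto> y n - (\<Sum>j. L\<^sup>j (e (n - 1 - j)))\<close> is an exact orbit.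
  A pseudo-orbit of \<open>L\<close> with errors below 1 stays within distance 2 of \<open>L (y k)\<close> at all later
  times; so if \<open>\<delta> w\<close> is below \<open>\<epsilon>/4\<close> on the ball of radius \<open>|w| + 2\<close>, every error entering
  at time \<open>n\<close> is below \<open>\<epsilon> (y n) / 4\<close> and the correction sum is below \<open>\<epsilon> (y n) / 2\<close>.
\<close>

lemma pos_cont_minorant:
  fixes b :: "'a::metric_space \<Rightarrow> real"
  assumes locally_bounded_below: "\<And>x. \<exists>c>0. \<exists>\<rho>>0. \<forall>y. dist x y < \<rho> \<longrightarrow> c \<le> b y"
  shows "\<exists>\<delta>\<in>pos_cont. \<forall>x. \<delta> x \<le> b x"
proof -
  define G where "G = range (\<lambda>y. (y, b y))"
  define \<delta> where "\<delta> x = infdist (x, 0::real) G" for x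
  have b_pos: "b x > 0" for x
  proof -
    obtain c \<rho> where c: "c > 0" "\<rho> > 0" "\<forall>y. dist x y < \<rho> \<longrightarrow> c \<le> b y"
      using locally_bounded_below by blast
    then have "c \<le> b x" by simp
    with c(1) show ?thesis by linarith
  qed
  have "\<delta> x \<le> b x" for x
  proof -
    have "\<delta> x \<le> dist (x, 0::real) (x, b x)" unfolding \<delta>_def by (rule infdist_le) (auto simp: G_def)
    also have "\<dots> = b x" using b_pos[of x] by (simp add: dist_Pair_Pair dist_real_def)
    finally show ?thesis .
  qed
  moreover have "\<delta> x > 0" for x
  proof -
    obtain c \<rho> where c: "c > 0" "\<rho> > 0" "\<forall>y. dist x y < \<rho> \<longrightarrow> c \<le> b y"
      using locally_bounded_below by blast
    have "min c \<rho> \<le> dist (x, 0::real) (y, b y)" for y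
    proof (cases "dist x y < \<rho>")
      case True
      have "c \<le> dist (snd (x, 0::real)) (snd (y, b y))" using c True b_pos[of y] by (simp add: dist_real_def)
      also have "\<dots> \<le> dist (x, 0::real) (y, b y)" by (rule dist_snd_le)
      finally show ?thesis by simp
    next
      case False
      have "dist (fst (x, 0::real)) (fst (y, b y)) \<le> dist (x, 0::real) (y, b y)" by (rule dist_fst_le)
      then show ?thesis using False by simp
    qed
    then have "min c \<rho> \<le> \<delta> x" unfolding \<delta>_def infdist_def G_def by (auto intro!: cINF_greatest)
    then show ?thesis using c by linarith
  qed
  moreover have "continuous_on UNIV \<delta>" unfolding \<delta>_def by (intro continuous_intros)
  ultimately show ?thesis unfolding pos_cont_def by blast
qed

lemma uniform_modulus_on_cball:
  fixes \<phi> :: "'a::heine_borel \<Rightarrow> 'b::metric_space"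
  assumes "continuous_on UNIV \<phi>" and "\<eta> \<in> pos_cont"
  shows "\<exists>r>0. \<forall>x x'. dist a x \<le> R \<longrightarrow> dist x x' < r \<longrightarrow> dist (\<phi> x) (\<phi> x') < \<eta> (\<phi> x)"
proof (cases "R < 0")
  case True
  then have "\<not> dist a x \<le> R" for x using zero_le_dist[of a x] by linarith
  then show ?thesis by (intro exI[of _ 1]) auto
next
  case False
  have "continuous_on UNIV (\<eta> \<circ> \<phi>)"
    using continuous_on_compose[OF assms(1) continuous_on_subset[of UNIV \<eta>]] assms(2)
    unfolding pos_cont_def by auto
  then obtain u where u: "\<forall>y\<in>cball a R. \<eta> (\<phi> u) \<le> \<eta> (\<phi> y)"
    using continuous_attains_inf[OF compact_cball _ continuous_on_subset[OF _ subset_UNIV], of a R] False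
    by fastforce
  have "uniformly_continuous_on (cball a (R + 1)) \<phi>"
    by (rule compact_uniformly_continuous[OF continuous_on_subset[OF assms(1) subset_UNIV] compact_cball])
  moreover have "\<eta> (\<phi> u) > 0" using assms(2) unfolding pos_cont_def by blast
  ultimately obtain d where d: "d > 0"
    "\<forall>x\<in>cball a (R + 1). \<forall>x'\<in>cball a (R + 1). dist x' x < d \<longrightarrow> dist (\<phi> x') (\<phi> x) < \<eta> (\<phi> u)"
    unfolding uniformly_continuous_on_def by blast
  show ?thesis
  proof (intro exI[of _ "min d 1"] conjI allI impI)
    fix x x' assume x: "dist a x \<le> R" and xx': "dist x x' < min d 1"
    have "dist a x' \<le> dist a x + dist x x'" by (rule dist_triangle)
    with x xx' have "x \<in> cball a (R + 1)" "x' \<in> cball a (R + 1)" by auto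
    then have "dist (\<phi> x) (\<phi> x') < \<eta> (\<phi> u)" using d(2) xx' by (simp add: dist_commute)
    also have "\<dots> \<le> \<eta> (\<phi> x)" using u x by simp
    finally show "dist (\<phi> x) (\<phi> x') < \<eta> (\<phi> x)" .
  qed (use d in auto)
qed

lemma pos_cont_modulus:
  fixes \<phi> :: "'a::heine_borel \<Rightarrow> 'b::metric_space"
  assumes "continuous_on UNIV \<phi>" and "\<eta> \<in> pos_cont"
  shows "\<exists>\<delta>\<in>pos_cont. \<forall>x x'. dist x x' < \<delta> x \<longrightarrow> dist (\<phi> x) (\<phi> x') < \<eta> (\<phi> x)"
proof -
  fix a :: 'a
  have "\<forall>k::nat. \<exists>r>0. \<forall>x x'. dist a x \<le> real k \<longrightarrow> dist x x' < r \<longrightarrow> dist (\<phi> x) (\<phi> x') < \<eta> (\<phi> x)"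
    using uniform_modulus_on_cball[OF assms] by blast
  then obtain r where r: "\<forall>k. r k > 0 \<and>
      (\<forall>x x'. dist a x \<le> real k \<longrightarrow> dist x x' < r k \<longrightarrow> dist (\<phi> x) (\<phi> x') < \<eta> (\<phi> x))"
    unfolding choice_iff by blast
  define b where "b x = r (nat \<lceil>dist a x\<rceil>)" for x
  have "\<exists>c>0. \<exists>\<rho>>0. \<forall>y. dist x y < \<rho> \<longrightarrow> c \<le> b y" for x
  proof (intro exI conjI allI impI)
    define K where "K = nat \<lceil>dist a x + 1\<rceil>"
    show "Min (r ` {..K}) > 0" using r by (subst Min_gr_iff) auto
    fix y assume "dist x y < 1"
    then have "nat \<lceil>dist a y\<rceil> \<le> K"
      unfolding K_def using dist_triangle[of a y x] by (intro nat_mono ceiling_mono) (simp add: dist_commute)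
    then show "Min (r ` {..K}) \<le> b y" unfolding b_def by (intro Min_le) auto
  qed simp
  then obtain \<delta> where \<delta>: "\<delta> \<in> pos_cont" "\<And>x. \<delta> x \<le> b x"
    using pos_cont_minorant by blast
  have "dist (\<phi> x) (\<phi> x') < \<eta> (\<phi> x)" if "dist x x' < \<delta> x" for x x'
  proof -
    have "dist x x' < r (nat \<lceil>dist a x\<rceil>)" using that \<delta>(2)[of x] unfolding b_def by linarith
    moreover have "dist a x \<le> real (nat \<lceil>dist a x\<rceil>)" by linarith
    ultimately show ?thesis using r by blast
  qed
  then show ?thesis using \<delta>(1) by blast
qed

lemma pos_cont_below_on_cballs:
  fixes \<epsilon> :: "'a::heine_borel \<Rightarrow> real"
  assumes "\<epsilon> \<in> pos_cont" and "0 \<le> c"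
  shows "\<exists>\<delta>\<in>pos_cont. \<forall>w y. dist a y \<le> dist a w + c \<longrightarrow> \<delta> w \<le> \<epsilon> y"
proof -
  have \<epsilon>: "continuous_on UNIV \<epsilon>" "\<And>y. \<epsilon> y > 0" using assms(1) unfolding pos_cont_def by auto
  define b where "b w = Inf (\<epsilon> ` cball a (dist a w + c))" for w
  have b_le: "b w \<le> \<epsilon> y" if "dist a y \<le> dist a w + c" for w y
    unfolding b_def using that \<epsilon>(2) by (intro cInf_lower bdd_belowI2[where m=0]) (auto intro: less_imp_le)
  have "\<exists>c'>0. \<exists>\<rho>>0. \<forall>y. dist x y < \<rho> \<longrightarrow> c' \<le> b y" for x
  proof -
    define B where "B = cball a (dist a x + 1 + c)"
    have "B \<noteq> {}" unfolding B_def using assms(2) zero_le_dist[of a x] by (simp; linarith)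
    then obtain u where u: "\<forall>y\<in>B. \<epsilon> u \<le> \<epsilon> y"
      using continuous_attains_inf[OF compact_cball _ continuous_on_subset[OF \<epsilon>(1) subset_UNIV]]
      unfolding B_def by blast
    have "\<epsilon> u \<le> b y" if "dist x y < 1" for y
    proof -
      have "cball a (dist a y + c) \<subseteq> B"
        unfolding B_def using dist_triangle[of a y x] that by (auto simp: dist_commute)
      moreover have "a \<in> cball a (dist a y + c)" using assms(2) by simp
      ultimately show ?thesis unfolding b_def using u by (intro cInf_greatest) auto
    qed
    then show ?thesis using \<epsilon>(2)[of u] zero_less_one by blast
  qed
  then obtain \<delta> where "\<delta> \<in> pos_cont" "\<And>x. \<delta> x \<le> b x" using pos_cont_minorant by blast
  then show ?thesis using b_le by (meson order_trans)
qed

lemma ipow_eq_of_orbit: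
  assumes "inj f" and "\<And>n. z (n + 1) = f (z n)"
  shows "ipow f n (z 0) = z n"
proof -
  have forward: "(f ^^ k) (z 0) = z (int k)" for k
    by (induction k) (auto simp: assms(2)[symmetric] add.commute)
  have backward: "(inv f ^^ k) (z 0) = z (- int k)" for k
  proof (induction k)
    case (Suc k)
    have "z (- int k) = f (z (- int (Suc k)))" using assms(2)[of "- int (Suc k)"] by simp
    then show ?case using Suc by (simp add: inv_f_f[OF assms(1)])
  qed simp
  show ?thesis unfolding ipow_def using forward[of "nat n"] backward[of "nat (- n)"] by auto
qed

lemma ipow_conjugate:
  assumes "inj g" and "surj f" and "\<And>u. g (h u) = h (f u)"
  shows "ipow g n (h z) = h (ipow f n z)"
proof -
  have "inv g (h u) = h (inv f u)" for u
  proof -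
    have "g (h (inv f u)) = h u" by (simp add: assms(3) surj_f_inv_f[OF assms(2)])
    then show ?thesis using inv_f_f[OF assms(1), of "h (inv f u)"] by simp
  qed
  then have "(inv g ^^ k) (h z) = h ((inv f ^^ k) z)" for k
    by (induction k) auto
  moreover have "(g ^^ k) (h z) = h ((f ^^ k) z)" for k
    by (induction k) (auto simp: assms(3))
  ultimately show ?thesis unfolding ipow_def by simp
qed

lemma topological_shadowing_conjugate:
  fixes g :: "'a::heine_borel \<Rightarrow> 'a" and f :: "'b::heine_borel \<Rightarrow> 'b"
  assumes "homeomorphism UNIV UNIV g g'" and "homeomorphism UNIV UNIV h h'"
    and conj: "\<And>x. h (g x) = f (h x)" and "topological_shadowing f"
  shows "topological_shadowing g"
proof -
  have h: "\<And>x. h' (h x) = x" "\<And>y. h (h' y) = y" "continuous_on UNIV h" "continuous_on UNIV h'"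
    using assms(2) unfolding homeomorphism_def by auto
  have g: "\<And>x. g' (g x) = x" "\<And>y. g (g' y) = y"
    using assms(1) unfolding homeomorphism_def by auto
  have "inj g" using g(1) by (rule inj_on_inverseI)
  moreover have "surj f"
    by (rule surjI[of f "\<lambda>y. h (g' (h' y))"]) (simp add: conj[symmetric] g(2) h(2))
  moreover have "g (h' u) = h' (f u)" for u using conj[of "h' u"] h(1)[of "g (h' u)"] h(2) by simp
  ultimately have orbit: "ipow g n (h' z) = h' (ipow f n z)" for n z
    by (rule ipow_conjugate)
  show ?thesis unfolding topological_shadowing_def
  proof
    fix \<epsilon> :: "'a \<Rightarrow> real" assume "\<epsilon> \<in> pos_cont"
    obtain \<epsilon>' where \<epsilon>': "\<epsilon>' \<in> pos_cont" "\<And>y y'. dist y y' < \<epsilon>' y \<Longrightarrow> dist (h' y) (h' y') < \<epsilon> (h' y)"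
      using pos_cont_modulus[OF h(4) \<open>\<epsilon> \<in> pos_cont\<close>] by blast
    obtain \<delta>' where \<delta>': "\<delta>' \<in> pos_cont" "\<And>ys. pseudo_orbit f \<delta>' ys \<Longrightarrow> shadowed f \<epsilon>' ys"
      using assms(4) \<epsilon>'(1) unfolding topological_shadowing_def by blast
    obtain \<delta> where \<delta>: "\<delta> \<in> pos_cont" "\<And>x x'. dist x x' < \<delta> x \<Longrightarrow> dist (h x) (h x') < \<delta>' (h x)"
      using pos_cont_modulus[OF h(3) \<delta>'(1)] by blast
    show "\<exists>\<delta>\<in>pos_cont. \<forall>xs. pseudo_orbit g \<delta> xs \<longrightarrow> shadowed g \<epsilon> xs"
    proof (intro bexI[OF _ \<delta>(1)] allI impI)
      fix xs assume "pseudo_orbit g \<delta> xs"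
      then have "pseudo_orbit f \<delta>' (\<lambda>n. h (xs n))"
        unfolding pseudo_orbit_def by (auto simp: conj[symmetric] intro: \<delta>(2))
      then obtain z where z: "\<And>n. dist (ipow f n z) (h (xs n)) < \<epsilon>' (h (xs n))"
        using \<delta>'(2) unfolding shadowed_def by blast
      have "dist (ipow g n (h' z)) (xs n) < \<epsilon> (xs n)" for n
        using \<epsilon>'(2)[OF z[of n, unfolded dist_commute[of "ipow f n z"]]]
        by (simp add: orbit h(1) dist_commute)
      then show "shadowed g \<epsilon> xs" unfolding shadowed_def by blast
    qed
  qed
qed

lemma norm_funpow_half_le:
  fixes L :: "'a::real_normed_vector \<Rightarrow> 'a"
  assumes "\<And>x. norm (L x) \<le> norm x / 2"
  shows "norm ((L ^^ j) x) \<le> norm x / 2 ^ j"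
proof (induction j)
  case (Suc j)
  have "norm ((L ^^ Suc j) x) \<le> norm ((L ^^ j) x) / 2" using assms[of "(L ^^ j) x"] by simp
  also have "\<dots> \<le> norm x / 2 ^ Suc j" using Suc by simp
  finally show ?case .
qed simp

lemma norm_pseudo_orbit_le:
  fixes L :: "'a::real_normed_vector \<Rightarrow> 'a"
  assumes "\<And>x. norm (L x) \<le> norm x / 2" and "\<And>n. norm (ys (n + 1) - L (ys n)) < 1"
  shows "norm (ys (k + 1 + int i)) \<le> norm (L (ys k)) + 2"
proof -
  have step: "norm (ys (n + 1)) \<le> norm (L (ys n)) + 1" for n
    using norm_triangle_ineq[of "L (ys n)" "ys (n + 1) - L (ys n)"] assms(2)[of n] by simp
  show ?thesis
  proof (induction i)
    case (Suc i)
    have "norm (ys (k + 1 + int (Suc i))) \<le> norm (L (ys (k + 1 + int i))) + 1"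
      using step[of "k + 1 + int i"] by (simp add: add.assoc)
    also have "\<dots> \<le> norm (ys (k + 1 + int i)) / 2 + 1" using assms(1) by simp
    also have "\<dots> \<le> norm (L (ys k)) + 2" using Suc norm_ge_zero[of "L (ys k)"] by linarith
    finally show ?case .
  qed (use step[of k] in simp)
qed

definition backward_sum :: "('a::real_normed_vector \<Rightarrow> 'a) \<Rightarrow> (int \<Rightarrow> 'a) \<Rightarrow> int \<Rightarrow> 'a" where
  "backward_sum L e n = (\<Sum>j. (L ^^ j) (e (n - 1 - int j)))"

lemma summable_backward_sum:
  fixes L :: "'a::real_normed_vector \<Rightarrow> 'a"
  assumes "\<And>x. norm (L x) \<le> norm x / 2" and "\<And>j. norm (e (n - 1 - int j)) \<le> B"
  shows "summable (\<lambda>j. norm ((L ^^ j) (e (n - 1 - int j))))"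
    and "(\<Sum>j. norm ((L ^^ j) (e (n - 1 - int j)))) \<le> 2 * B"
proof -
  have le: "norm ((L ^^ j) (e (n - 1 - int j))) \<le> B * (1/2) ^ j" for j
  proof -
    have "norm ((L ^^ j) (e (n - 1 - int j))) \<le> norm (e (n - 1 - int j)) / 2 ^ j"
      by (rule norm_funpow_half_le[OF assms(1)])
    also have "\<dots> \<le> B / 2 ^ j" by (rule divide_right_mono[OF assms(2)]) simp
    finally show ?thesis by (simp add: power_one_over)
  qed
  have geometric: "summable (\<lambda>j. B * (1/2::real) ^ j)" by (simp add: summable_geometric)
  show summable: "summable (\<lambda>j. norm ((L ^^ j) (e (n - 1 - int j))))"
    using le by (intro summable_comparison_test'[OF geometric]) auto
  have "(\<Sum>j. norm ((L ^^ j) (e (n - 1 - int j)))) \<le> (\<Sum>j. B * (1/2) ^ j)"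
    by (rule suminf_le[OF le summable geometric])
  also have "\<dots> = 2 * B" by (simp add: suminf_mult summable_geometric suminf_geometric)
  finally show "(\<Sum>j. norm ((L ^^ j) (e (n - 1 - int j)))) \<le> 2 * B" .
qed

lemma norm_backward_sum_le:
  fixes L :: "'a::banach \<Rightarrow> 'a"
  assumes "\<And>x. norm (L x) \<le> norm x / 2" and "\<And>j. norm (e (n - 1 - int j)) \<le> B"
  shows "norm (backward_sum L e n) \<le> 2 * B"
  unfolding backward_sum_def
  using summable_norm[OF summable_backward_sum(1)[of L e n B, OF assms]]
    summable_backward_sum(2)[of L e n B, OF assms]
  by linarith

lemma backward_sum_step:
  fixes L :: "'a::banach \<Rightarrow> 'a"
  assumes "bounded_linear L" and "\<And>x. norm (L x) \<le> norm x / 2" and "\<And>k. norm (e k) \<le> B"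
  shows "backward_sum L e (n + 1) = e n + L (backward_sum L e n)"
proof -
  define a where "a m j = (L ^^ j) (e (m - 1 - int j))" for m j
  have summable: "summable (a m)" for m
    unfolding a_def by (rule summable_norm_cancel, rule summable_backward_sum(1)[OF assms(2) assms(3)])
  have shift: "a (n + 1) (Suc j) = L (a n j)" for j
  proof -
    have "n + 1 - 1 - int (Suc j) = n - 1 - int j" by simp
    then show ?thesis unfolding a_def by (simp only: funpow.simps o_apply)
  qed
  have "backward_sum L e (n + 1) = a (n + 1) 0 + (\<Sum>j. a (n + 1) (Suc j))"
    unfolding backward_sum_def a_def[symmetric] using suminf_split_head[OF summable] by simp
  also have "(\<Sum>j. a (n + 1) (Suc j)) = L (backward_sum L e n)"
    unfolding shift backward_sum_def a_def[symmetric]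
    by (rule bounded_linear.suminf[OF assms(1) summable, symmetric])
  finally show ?thesis unfolding a_def by simp
qed

theorem topological_shadowing_linear_contraction:
  fixes L :: "'a::euclidean_space \<Rightarrow> 'a"
  assumes "bounded_linear L" and "inj L" and contr: "\<And>x. norm (L x) \<le> norm x / 2"
  shows "topological_shadowing L"
  unfolding topological_shadowing_def
proof
  fix \<epsilon> :: "'a \<Rightarrow> real" assume "\<epsilon> \<in> pos_cont"
  then obtain \<delta>0 where \<delta>0: "\<delta>0 \<in> pos_cont" "\<forall>w y. norm y \<le> norm (w::'a) + 2 \<longrightarrow> \<delta>0 w \<le> \<epsilon> y"
    using pos_cont_below_on_cballs[of \<epsilon> 2 0] unfolding dist_0_norm by auto
  define \<delta> where "\<delta> w = min 1 (\<delta>0 w) / 4" for w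
  have "\<delta> \<in> pos_cont"
    using \<delta>0(1) unfolding pos_cont_def \<delta>_def by (auto intro!: continuous_intros)
  moreover have "shadowed L \<epsilon> ys" if "pseudo_orbit L \<delta> ys" for ys
  proof -
    define e where "e n = ys (n + 1) - L (ys n)" for n
    have e_small: "norm (e n) < \<delta> (L (ys n))" for n
      using that unfolding pseudo_orbit_def e_def by (simp add: dist_norm norm_minus_commute)
    have e_lt_1: "norm (e n) < 1" for n
      using e_small[of n] unfolding \<delta>_def by linarith
    have e_le: "norm (e (n - 1 - int j)) \<le> \<epsilon> (ys n) / 4" for n j
    proof -
      have "norm (ys n) \<le> norm (L (ys (n - 1 - int j))) + 2"
        using norm_pseudo_orbit_le[OF contr, of ys "n - 1 - int j" j] e_lt_1
        unfolding e_def by simp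
      then show ?thesis using e_small[of "n - 1 - int j"] \<delta>0(2) unfolding \<delta>_def by fastforce
    qed
    define z where "z n = ys n - backward_sum L e n" for n
    have "z (n + 1) = L (z n)" for n
      unfolding z_def backward_sum_step[OF assms(1) contr less_imp_le[OF e_lt_1]]
      using e_def[of n] by (simp add: linear_diff[OF bounded_linear.linear[OF assms(1)]])
    then have "ipow L n (z 0) = z n" for n by (rule ipow_eq_of_orbit[OF assms(2)])
    moreover have "norm (backward_sum L e n) < \<epsilon> (ys n)" for n
    proof -
      have "\<epsilon> (ys n) > 0" using \<open>\<epsilon> \<in> pos_cont\<close> unfolding pos_cont_def by blast
      then show ?thesis using norm_backward_sum_le[of L e n, OF contr e_le] by linarith
    qed
    ultimately have "dist (ipow L n (z 0)) (ys n) < \<epsilon> (ys n)" for n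
      unfolding z_def by (simp add: dist_norm)
    then show ?thesis unfolding shadowed_def by blast
  qed
  ultimately show "\<exists>\<delta>\<in>pos_cont. \<forall>ys. pseudo_orbit L \<delta> ys \<longrightarrow> shadowed L \<epsilon> ys" by blast
qed

theorem mainTheorem8:
  fixes g g' :: "complex \<Rightarrow> complex"
  assumes "homeomorphism UNIV UNIV g g'"
    and "\<exists>h h'. homeomorphism UNIV UNIV h h' \<and> (\<forall>z. h (g z) = cnj (h z) / 2)"
  shows "topological_shadowing g"
proof -
  obtain h h' where h: "homeomorphism UNIV UNIV h h'" and conj: "\<And>z. h (g z) = cnj (h z) / 2"
    using assms(2) by blast
  have "bounded_linear (\<lambda>z::complex. cnj z / 2)"
    using bounded_linear_compose[OF bounded_linear_divide bounded_linear_cnj] by (simp add: o_def)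
  moreover have "inj (\<lambda>z::complex. cnj z / 2)" by (simp add: inj_def)
  moreover have "norm (cnj z / 2) \<le> norm z / 2" for z :: complex by (simp add: norm_divide)
  ultimately have "topological_shadowing (\<lambda>z::complex. cnj z / 2)"
    by (rule topological_shadowing_linear_contraction)
  with assms(1) h conj show ?thesis by (rule topological_shadowing_conjugate)
qed

end
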